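(* Let $\mathcal{M}$ be an $L5$-model and let $\gamma\colon V\to M$ be an assignment in $\mathcal{M}$. Then there exist an $L5$-frame $(W,R)$, an $R$-maximal world $w_T\in W$ and an assignment $g\colon V\to\mathrm{Pow}(W)$ in $(W,R)$ such that for all formulas $\varphi$: $$(\mathcal{M},\gamma)\vDash\varphi \iff (w_T,g)\vDash\varphi.$$
   Context: Formulas are built from a countable set $V$ of propositional variables using $\wedge,\vee,\rightarrow,\bot$ and the unary modal operator $\square$; $\top$ abbreviates $\bot\rightarrow\bot$. An $L5$-model is a structure $\mathcal{M}=(M,\mathit{TRUE},f_\bot,f_\top,f_\rightarrow,f_\vee,f_\wedge,f_\square)$ such that $(M,f_\bot,f_\top,f_\rightarrow,f_\vee,f_\wedge)$ is a Heyting algebra (bottom $f_\bot$, top $f_\top$, relative pseudo-complement $f_\rightarrow$, lattice order $\le$). Moreover, $\mathit{TRUE}\subseteq M$ is an ultrafilter, and $f_\square\colon M\to M$ satisfies, for all $m,m',m''\in M$: (i) $f_\square(m)\le m$; (ii) $f_\square(f_\rightarrow(m,m'))\le f_\rightarrow(f_\square(f_\rightarrow(m',m'')),f_\square(f_\rightarrow(m,m'')))$; (iii) $f_\square(f_\vee(m,m'))\le f_\vee(f_\square(m),f_\square(m'))$; (iv) $f_\square(m)\in\mathit{TRUE}$ iff $m=f_\top$; (v) $f_\square(m)=f_\top$ if $m=f_\top$, and $f_\square(m)=f_\bot$ otherwise. An assignment $\gamma\colon V\to M$ extends to all formulas by: - $\gamma(\bot)=f_\bot$; - $\gamma(\square\varphi)=f_\square(\gamma(\varphi))$;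 - $\gamma(\varphi*\psi)=f_*(\gamma(\varphi),\gamma(\psi))$ for $*\in\{\vee,\wedge,\rightarrow\}$. Satisfaction is $(\mathcal{M},\gamma)\vDash\varphi$ iff $\gamma(\varphi)\in\mathit{TRUE}$. An $L5$-frame is a pair $(W,R)$ with the following properties: - $W$ is a non-empty set; - $R$ is a partial order on $W$; - there is an $R$-smallest element $w_B$; - every $R$-chain has an upper bound in $W$. An assignment in $(W,R)$ is a map $g\colon V\to\mathrm{Pow}(W)$ with $wRw'$ and $w\in g(x)$ implying $w'\in g(x)$. Kripke satisfaction is defined as follows: - $(w,g)\nvDash\bot$; - $(w,g)\vDash x$ iff $w\in g(x)$; - $\vee,\wedge$ are evaluated pointwise; - $(w,g)\vDash\varphi\rightarrow\psi$ iff for all $w'$ with $wRw'$, $(w',g)\vDash\varphi$ implies $(w',g)\vDash\psi$; - $(w,g)\vDash\square\varphi$ iff $(w_B,g)\vDash\varphi$. *)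

theory Defs
  imports Main
begin

datatype fm =
    Var nat
  | Bot
  | And fm fm
  | Or fm fm
  | Imp fm fm
  | Box fm

definition Top :: fm where "Top = Imp Bot Bot"

record 'm L5model =
  carrier :: "'m set"
  TRUE :: "'m set"
  fbot :: 'm
  ftop :: 'm
  fimp :: "'m \<Rightarrow> 'm \<Rightarrow> 'm"
  fvee :: "'m \<Rightarrow> 'm \<Rightarrow> 'm"
  fwedge :: "'m \<Rightarrow> 'm \<Rightarrow> 'm"
  fbox :: "'m \<Rightarrow> 'm"

definition le :: "('m, 'z) L5model_scheme \<Rightarrow> 'm \<Rightarrow> 'm \<Rightarrow> bool" where
  "le A a b \<longleftrightarrow> fwedge A a b = a"

definition heyting_algebra :: "('m, 'z) L5model_scheme \<Rightarrow> bool" where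
  "heyting_algebra A \<longleftrightarrow>
     (let M = carrier A in
      fbot A \<in> M \<and> ftop A \<in> M \<and>
      (\<forall>a\<in>M. \<forall>b\<in>M. fimp A a b \<in> M \<and> fvee A a b \<in> M \<and> fwedge A a b \<in> M) \<and>
      (\<forall>a\<in>M. \<forall>b\<in>M. \<forall>c\<in>M.
          fwedge A (fwedge A a b) c = fwedge A a (fwedge A b c) \<and>
          fvee A (fvee A a b) c = fvee A a (fvee A b c)) \<and>
      (\<forall>a\<in>M. \<forall>b\<in>M.
          fwedge A a b = fwedge A b a \<and> fvee A a b = fvee A b a \<and>
          fwedge A a (fvee A a b) = a \<and> fvee A a (fwedge A a b) = a) \<and>
      (\<forall>a\<in>M. le A (fbot A) a \<and> le A a (ftop A)) \<and>
      (\<forall>a\<in>M. \<forall>b\<in>M. \<forall>c\<in>M. le A c (fimp A a b) \<longleftrightarrow> le A (fwedge A c a) b))"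

definition is_filter :: "('m, 'z) L5model_scheme \<Rightarrow> 'm set \<Rightarrow> bool" where
  "is_filter A F \<longleftrightarrow> F \<subseteq> carrier A \<and> F \<noteq> {} \<and>
     (\<forall>a\<in>F. \<forall>b\<in>carrier A. le A a b \<longrightarrow> b \<in> F) \<and>
     (\<forall>a\<in>F. \<forall>b\<in>F. fwedge A a b \<in> F)"

definition proper_filter :: "('m, 'z) L5model_scheme \<Rightarrow> 'm set \<Rightarrow> bool" where
  "proper_filter A F \<longleftrightarrow> is_filter A F \<and> fbot A \<notin> F"

definition ultrafilter :: "('m, 'z) L5model_scheme \<Rightarrow> 'm set \<Rightarrow> bool" where
  "ultrafilter A F \<longleftrightarrow> proper_filter A F \<and>
     (\<forall>G. proper_filter A G \<and> F \<subseteq> G \<longrightarrow> G = F)"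

definition L5_model :: "('m, 'z) L5model_scheme \<Rightarrow> bool" where
  "L5_model A \<longleftrightarrow> heyting_algebra A \<and> ultrafilter A (TRUE A) \<and>
     (\<forall>m\<in>carrier A. fbox A m \<in> carrier A) \<and>
     (\<forall>m\<in>carrier A. \<forall>m'\<in>carrier A. \<forall>m''\<in>carrier A.
        le A (fbox A m) m \<and>
        le A (fbox A (fimp A m m'))
             (fimp A (fbox A (fimp A m' m'')) (fbox A (fimp A m m''))) \<and>
        le A (fbox A (fvee A m m')) (fvee A (fbox A m) (fbox A m')) \<and>
        (fbox A m \<in> TRUE A \<longleftrightarrow> m = ftop A) \<and>
        fbox A m = (if m = ftop A then ftop A else fbot A))"

primrec eval :: "('m, 'z) L5model_scheme \<Rightarrow> (nat \<Rightarrow> 'm) \<Rightarrow> fm \<Rightarrow> 'm" where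
  "eval A \<gamma> (Var x) = \<gamma> x"
| "eval A \<gamma> Bot = fbot A"
| "eval A \<gamma> (And p q) = fwedge A (eval A \<gamma> p) (eval A \<gamma> q)"
| "eval A \<gamma> (Or p q) = fvee A (eval A \<gamma> p) (eval A \<gamma> q)"
| "eval A \<gamma> (Imp p q) = fimp A (eval A \<gamma> p) (eval A \<gamma> q)"
| "eval A \<gamma> (Box p) = fbox A (eval A \<gamma> p)"

definition msat :: "('m, 'z) L5model_scheme \<Rightarrow> (nat \<Rightarrow> 'm) \<Rightarrow> fm \<Rightarrow> bool" where
  "msat A \<gamma> p \<longleftrightarrow> eval A \<gamma> p \<in> TRUE A"

definition L5_frame :: "'w set \<Rightarrow> ('w \<Rightarrow> 'w \<Rightarrow> bool) \<Rightarrow> bool" where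
  "L5_frame W R \<longleftrightarrow> W \<noteq> {} \<and>
     (\<forall>w\<in>W. R w w) \<and>
     (\<forall>u\<in>W. \<forall>v\<in>W. \<forall>w\<in>W. R u v \<and> R v w \<longrightarrow> R u w) \<and>
     (\<forall>u\<in>W. \<forall>v\<in>W. R u v \<and> R v u \<longrightarrow> u = v) \<and>
     (\<exists>b\<in>W. \<forall>w\<in>W. R b w) \<and>
     (\<forall>C\<subseteq>W. (\<forall>u\<in>C. \<forall>v\<in>C. R u v \<or> R v u) \<longrightarrow> (\<exists>ub\<in>W. \<forall>c\<in>C. R c ub))"

text \<open>The R-smallest world w_B (unique by antisymmetry).\<close>
definition wB :: "'w set \<Rightarrow> ('w \<Rightarrow> 'w \<Rightarrow> bool) \<Rightarrow> 'w" where
  "wB W R = (THE b. b \<in> W \<and> (\<forall>w\<in>W. R b w))"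

definition frame_assignment :: "'w set \<Rightarrow> ('w \<Rightarrow> 'w \<Rightarrow> bool) \<Rightarrow> (nat \<Rightarrow> 'w set) \<Rightarrow> bool" where
  "frame_assignment W R g \<longleftrightarrow>
     (\<forall>x. g x \<subseteq> W \<and> (\<forall>w\<in>W. \<forall>w'\<in>W. R w w' \<and> w \<in> g x \<longrightarrow> w' \<in> g x))"

definition R_maximal :: "'w set \<Rightarrow> ('w \<Rightarrow> 'w \<Rightarrow> bool) \<Rightarrow> 'w \<Rightarrow> bool" where
  "R_maximal W R w \<longleftrightarrow> w \<in> W \<and> (\<forall>w'\<in>W. R w w' \<longrightarrow> w' = w)"

primrec ksat :: "'w set \<Rightarrow> ('w \<Rightarrow> 'w \<Rightarrow> bool) \<Rightarrow> (nat \<Rightarrow> 'w set) \<Rightarrow> 'w \<Rightarrow> fm \<Rightarrow> bool" where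
  "ksat W R g w (Var x) = (w \<in> g x)"
| "ksat W R g w Bot = False"
| "ksat W R g w (And p q) = (ksat W R g w p \<and> ksat W R g w q)"
| "ksat W R g w (Or p q) = (ksat W R g w p \<or> ksat W R g w q)"
| "ksat W R g w (Imp p q) =
     (\<forall>w'\<in>W. R w w' \<longrightarrow> ksat W R g w' p \<longrightarrow> ksat W R g w' q)"
| "ksat W R g w (Box p) = ksat W R g (wB W R) p"

end

theory Submission imports Defs begin

text \<open>Take as worlds the prime filters of the algebra, ordered by inclusion. By the prime filter
  theorem a prime filter contains \<open>a \<rightarrow> b\<close> iff every prime filter above it that contains \<open>a\<close>
  also contains \<open>b\<close>, so every world \<open>P\<close> satisfies exactly the formulas whose value lies in \<open>P\<close>.
  The box needs one more observation: by axiom (v) it only asks whether a value is \<open>\<top>\<close>, and by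
  axiom (iii) \<open>\<top>\<close> is join-prime, so \<open>{\<top>}\<close> is a prime filter, the least world \<open>w\<^sub>B\<close>.
  Finally the ultrafilter \<open>TRUE\<close> is prime and maximal among proper filters, i.e. an \<open>R\<close>-maximal
  world.\<close>

locale heyting =
  fixes A :: "('m, 'z) L5model_scheme"
  assumes heyting_algebra: "heyting_algebra A"
begin

abbreviation M where "M \<equiv> carrier A"
abbreviation meet (infixl "\<sqinter>" 70) where "a \<sqinter> b \<equiv> fwedge A a b"
abbreviation join (infixl "\<squnion>" 65) where "a \<squnion> b \<equiv> fvee A a b"
abbreviation imp (infixr "\<Rightarrow>\<^sub>A" 60) where "a \<Rightarrow>\<^sub>A b \<equiv> fimp A a b"
abbreviation leq (infix "\<preceq>" 50) where "a \<preceq> b \<equiv> le A a b"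

lemma bot_closed [simp]: "fbot A \<in> M"
  and top_closed [simp]: "ftop A \<in> M"
  and ops_closed [simp]: "a \<in> M \<Longrightarrow> b \<in> M \<Longrightarrow> a \<Rightarrow>\<^sub>A b \<in> M \<and> a \<squnion> b \<in> M \<and> a \<sqinter> b \<in> M"
  and meet_assoc: "a \<in> M \<Longrightarrow> b \<in> M \<Longrightarrow> c \<in> M \<Longrightarrow> a \<sqinter> b \<sqinter> c = a \<sqinter> (b \<sqinter> c)"
  and join_assoc: "a \<in> M \<Longrightarrow> b \<in> M \<Longrightarrow> c \<in> M \<Longrightarrow> a \<squnion> b \<squnion> c = a \<squnion> (b \<squnion> c)"
  and meet_comm: "a \<in> M \<Longrightarrow> b \<in> M \<Longrightarrow> a \<sqinter> b = b \<sqinter> a"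
  and join_comm: "a \<in> M \<Longrightarrow> b \<in> M \<Longrightarrow> a \<squnion> b = b \<squnion> a"
  and meet_absorb: "a \<in> M \<Longrightarrow> b \<in> M \<Longrightarrow> a \<sqinter> (a \<squnion> b) = a"
  and join_absorb: "a \<in> M \<Longrightarrow> b \<in> M \<Longrightarrow> a \<squnion> (a \<sqinter> b) = a"
  and bot_le: "a \<in> M \<Longrightarrow> fbot A \<preceq> a"
  and le_top: "a \<in> M \<Longrightarrow> a \<preceq> ftop A"
  and le_imp_iff: "a \<in> M \<Longrightarrow> b \<in> M \<Longrightarrow> c \<in> M \<Longrightarrow> c \<preceq> a \<Rightarrow>\<^sub>A b \<longleftrightarrow> c \<sqinter> a \<preceq> b"
  using heyting_algebra unfolding heyting_algebra_def Let_def by auto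

lemma meet_idem: "a \<in> M \<Longrightarrow> a \<sqinter> a = a"
  by (metis meet_absorb join_absorb ops_closed)

lemma join_idem: "a \<in> M \<Longrightarrow> a \<squnion> a = a"
  by (metis meet_absorb join_absorb ops_closed)

lemma le_refl: "a \<in> M \<Longrightarrow> a \<preceq> a"
  by (simp add: le_def meet_idem)

lemma le_antisym: "a \<in> M \<Longrightarrow> b \<in> M \<Longrightarrow> a \<preceq> b \<Longrightarrow> b \<preceq> a \<Longrightarrow> a = b"
  unfolding le_def by (metis meet_comm)

lemma le_trans: "a \<in> M \<Longrightarrow> b \<in> M \<Longrightarrow> c \<in> M \<Longrightarrow> a \<preceq> b \<Longrightarrow> b \<preceq> c \<Longrightarrow> a \<preceq> c"
  unfolding le_def by (metis meet_assoc)

lemma meet_le1: "a \<in> M \<Longrightarrow> b \<in> M \<Longrightarrow> a \<sqinter> b \<preceq> a"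
  unfolding le_def by (metis meet_assoc meet_comm meet_idem)

lemma meet_le2: "a \<in> M \<Longrightarrow> b \<in> M \<Longrightarrow> a \<sqinter> b \<preceq> b"
  unfolding le_def by (metis meet_assoc meet_idem)

lemma le_meet: "a \<in> M \<Longrightarrow> b \<in> M \<Longrightarrow> c \<in> M \<Longrightarrow> c \<preceq> a \<Longrightarrow> c \<preceq> b \<Longrightarrow> c \<preceq> a \<sqinter> b"
  unfolding le_def by (metis meet_assoc)

lemma le_iff_join_eq: "a \<in> M \<Longrightarrow> b \<in> M \<Longrightarrow> a \<preceq> b \<longleftrightarrow> a \<squnion> b = b"
  unfolding le_def by (metis meet_absorb join_absorb meet_comm join_comm)

lemma join_ge1: "a \<in> M \<Longrightarrow> b \<in> M \<Longrightarrow> a \<preceq> a \<squnion> b"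
  by (simp add: le_iff_join_eq join_assoc[symmetric] join_idem)

lemma join_ge2: "a \<in> M \<Longrightarrow> b \<in> M \<Longrightarrow> b \<preceq> a \<squnion> b"
  by (metis join_comm join_ge1)

lemma join_le: "a \<in> M \<Longrightarrow> b \<in> M \<Longrightarrow> c \<in> M \<Longrightarrow> a \<preceq> c \<Longrightarrow> b \<preceq> c \<Longrightarrow> a \<squnion> b \<preceq> c"
  by (simp add: le_iff_join_eq join_assoc)

lemma imp_meet_le: "a \<in> M \<Longrightarrow> b \<in> M \<Longrightarrow> (a \<Rightarrow>\<^sub>A b) \<sqinter> a \<preceq> b"
  using le_imp_iff[of a b "a \<Rightarrow>\<^sub>A b"] le_refl by simp

lemma imp_meet_imp_meet_join_le:
  assumes x: "x \<in> M" and y: "y \<in> M" and b: "b \<in> M"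
  shows "(x \<Rightarrow>\<^sub>A b) \<sqinter> (y \<Rightarrow>\<^sub>A b) \<sqinter> (x \<squnion> y) \<preceq> b"
proof -
  define c where "c = (x \<Rightarrow>\<^sub>A b) \<sqinter> (y \<Rightarrow>\<^sub>A b)"
  have c: "c \<in> M" using x y b by (simp add: c_def)
  have "c \<preceq> x \<Rightarrow>\<^sub>A b" "c \<preceq> y \<Rightarrow>\<^sub>A b"
    using meet_le1 meet_le2 x y b by (simp_all add: c_def)
  then have "c \<sqinter> x \<preceq> b" "c \<sqinter> y \<preceq> b"
    using le_imp_iff c x y b by simp_all
  then have "x \<preceq> c \<Rightarrow>\<^sub>A b" "y \<preceq> c \<Rightarrow>\<^sub>A b"
    using le_imp_iff c x y b meet_comm by simp_all
  then have "x \<squnion> y \<preceq> c \<Rightarrow>\<^sub>A b" using join_le x y b c by simp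
  then have "c \<sqinter> (x \<squnion> y) \<preceq> b" using le_imp_iff c x y b meet_comm by simp
  then show ?thesis by (simp add: c_def)
qed

lemma filter_subset: "is_filter A F \<Longrightarrow> a \<in> F \<Longrightarrow> a \<in> M"
  and filter_upward: "is_filter A F \<Longrightarrow> a \<in> F \<Longrightarrow> b \<in> M \<Longrightarrow> a \<preceq> b \<Longrightarrow> b \<in> F"
  and filter_meet: "is_filter A F \<Longrightarrow> a \<in> F \<Longrightarrow> b \<in> F \<Longrightarrow> a \<sqinter> b \<in> F"
  unfolding is_filter_def by blast+

lemma filter_top:
  assumes F: "is_filter A F"
  shows "ftop A \<in> F"
proof -
  obtain a where "a \<in> F" using F unfolding is_filter_def by blast
  then show ?thesis using F filter_subset filter_upward le_top top_closed by blast
qed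

lemma filter_meet_iff:
  "is_filter A F \<Longrightarrow> a \<in> M \<Longrightarrow> b \<in> M \<Longrightarrow> a \<sqinter> b \<in> F \<longleftrightarrow> a \<in> F \<and> b \<in> F"
  by (meson filter_meet filter_upward meet_le1 meet_le2 ops_closed)

lemma filter_Union_chain:
  assumes "C \<noteq> {}" and filters: "\<forall>F\<in>C. is_filter A F" and chain: "chain\<^sub>\<subseteq> C"
  shows "is_filter A (\<Union>C)"
  unfolding is_filter_def
proof (intro conjI ballI impI)
  show "\<Union>C \<subseteq> M" using filters filter_subset by blast
  show "\<Union>C \<noteq> {}" using assms(1) filters filter_top by blast
  show "b \<in> \<Union>C" if "a \<in> \<Union>C" "b \<in> M" "a \<preceq> b" for a b
    using that filters filter_upward by blast
  show "a \<sqinter> b \<in> \<Union>C" if ab: "a \<in> \<Union>C" "b \<in> \<Union>C" for a b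
  proof -
    obtain F G where "F \<in> C" "G \<in> C" "a \<in> F" "b \<in> G" using ab by blast
    moreover have "F \<subseteq> G \<or> G \<subseteq> F" using chain \<open>F \<in> C\<close> \<open>G \<in> C\<close> unfolding chain_subset_def by blast
    ultimately show ?thesis using filters filter_meet by blast
  qed
qed

definition filter_adjoin :: "'m set \<Rightarrow> 'm \<Rightarrow> 'm set" where
  "filter_adjoin F x = {z \<in> M. \<exists>t\<in>F. t \<sqinter> x \<preceq> z}"

lemma filter_adjoin:
  assumes F: "is_filter A F" and x: "x \<in> M"
  shows "is_filter A (filter_adjoin F x)" "F \<subseteq> filter_adjoin F x" "x \<in> filter_adjoin F x"
proof -
  show "F \<subseteq> filter_adjoin F x"
    unfolding filter_adjoin_def using F x filter_subset meet_le1 by blast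
  show "x \<in> filter_adjoin F x"
    unfolding filter_adjoin_def using x filter_top[OF F] meet_le2[OF top_closed x] by blast
  have meet_closed: "a \<sqinter> b \<in> filter_adjoin F x"
    if ab: "a \<in> filter_adjoin F x" "b \<in> filter_adjoin F x" for a b
  proof -
    obtain s t where a: "a \<in> M" "s \<in> F" "s \<sqinter> x \<preceq> a" and b: "b \<in> M" "t \<in> F" "t \<sqinter> x \<preceq> b"
      using ab unfolding filter_adjoin_def by blast
    have s: "s \<in> M" and t: "t \<in> M" using a b F filter_subset by auto
    have "s \<sqinter> t \<sqinter> x \<preceq> s \<sqinter> x" "s \<sqinter> t \<sqinter> x \<preceq> t \<sqinter> x"
      using s t x le_meet meet_le1 meet_le2 le_trans meet_assoc by (metis ops_closed)+
    then have "s \<sqinter> t \<sqinter> x \<preceq> a \<sqinter> b"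
      using le_meet le_trans a b s t x by (metis ops_closed)
    then show ?thesis
      unfolding filter_adjoin_def using a b F filter_meet by auto
  qed
  have "b \<in> filter_adjoin F x" if ab: "a \<in> filter_adjoin F x" "b \<in> M" "a \<preceq> b" for a b
  proof -
    obtain t where "a \<in> M" "t \<in> F" "t \<sqinter> x \<preceq> a" using ab(1) unfolding filter_adjoin_def by blast
    moreover have "t \<in> M" using \<open>t \<in> F\<close> F filter_subset by blast
    ultimately show ?thesis
      using le_trans[of "t \<sqinter> x" a b] ab(2,3) x unfolding filter_adjoin_def by auto
  qed
  then show "is_filter A (filter_adjoin F x)"
    using meet_closed \<open>x \<in> filter_adjoin F x\<close> unfolding is_filter_def filter_adjoin_def by blast
qed

lemma mem_filter_adjoin_iff:
  assumes F: "is_filter A F" and a: "a \<in> M" and b: "b \<in> M"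
  shows "b \<in> filter_adjoin F a \<longleftrightarrow> a \<Rightarrow>\<^sub>A b \<in> F"
proof
  assume "b \<in> filter_adjoin F a"
  then obtain t where "t \<in> F" "t \<sqinter> a \<preceq> b" unfolding filter_adjoin_def by blast
  moreover have "t \<in> M" using \<open>t \<in> F\<close> filter_subset[OF F] by blast
  ultimately have "t \<preceq> a \<Rightarrow>\<^sub>A b" using le_imp_iff[OF a b] by blast
  then show "a \<Rightarrow>\<^sub>A b \<in> F" using filter_upward[OF F \<open>t \<in> F\<close>] a b by simp
next
  assume "a \<Rightarrow>\<^sub>A b \<in> F"
  then show "b \<in> filter_adjoin F a"
    using imp_meet_le[OF a b] b unfolding filter_adjoin_def by (simp add: bexI[of _ "a \<Rightarrow>\<^sub>A b"])
qed

definition prime_filter :: "'m set \<Rightarrow> bool" where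
  "prime_filter P \<longleftrightarrow> proper_filter A P \<and> (\<forall>x\<in>M. \<forall>y\<in>M. x \<squnion> y \<in> P \<longrightarrow> x \<in> P \<or> y \<in> P)"

lemma prime_filter_is_filter: "prime_filter P \<Longrightarrow> is_filter A P"
  and prime_filter_bot: "prime_filter P \<Longrightarrow> fbot A \<notin> P"
  unfolding prime_filter_def proper_filter_def by blast+

lemma prime_filter_join_iff:
  assumes "prime_filter P" "a \<in> M" "b \<in> M"
  shows "a \<squnion> b \<in> P \<longleftrightarrow> a \<in> P \<or> b \<in> P"
proof
  show "a \<in> P \<or> b \<in> P" if "a \<squnion> b \<in> P" using that assms unfolding prime_filter_def by blast
  have "a \<squnion> b \<in> M" using assms by simp
  then show "a \<squnion> b \<in> P" if "a \<in> P \<or> b \<in> P"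
    using that filter_upward[OF prime_filter_is_filter[OF assms(1)]] join_ge1[OF assms(2,3)] join_ge2[OF assms(2,3)]
    by blast
qed

theorem prime_filter_theorem:
  assumes F: "is_filter A F" and b: "b \<in> M" "b \<notin> F"
  obtains Q where "prime_filter Q" "F \<subseteq> Q" "b \<notin> Q"
proof -
  define S where "S = {Q. is_filter A Q \<and> F \<subseteq> Q \<and> b \<notin> Q}"
  have "\<exists>U\<in>S. \<forall>X\<in>C. X \<subseteq> U" if "C \<in> chains S" for C
  proof (cases "C = {}")
    case True
    then show ?thesis using F b unfolding S_def by auto
  next
    case False
    have "C \<subseteq> S" "chain\<^sub>\<subseteq> C" using that unfolding chains_def by auto
    then have "is_filter A (\<Union>C)" "F \<subseteq> \<Union>C" "b \<notin> \<Union>C"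
      using filter_Union_chain[OF False] False unfolding S_def by blast+
    then show ?thesis unfolding S_def by blast
  qed
  then obtain Q where "Q \<in> S" and Q_maximal: "\<forall>X\<in>S. Q \<subseteq> X \<longrightarrow> X = Q"
    using Zorn_Lemma2[of S] by blast
  then have Q: "is_filter A Q" "F \<subseteq> Q" "b \<notin> Q" unfolding S_def by auto
  \<comment> \<open>By maximality, adjoining any \<open>x \<notin> Q\<close> forces \<open>b\<close> in, i.e. puts \<open>x \<Rightarrow> b\<close> into \<open>Q\<close>.\<close>
  have imp_b: "x \<Rightarrow>\<^sub>A b \<in> Q" if "x \<in> M" "x \<notin> Q" for x
  proof -
    have "filter_adjoin Q x \<notin> S"
      using Q_maximal filter_adjoin[OF Q(1) that(1)] that(2) by blast
    then show ?thesis
      using filter_adjoin[OF Q(1) that(1)] Q mem_filter_adjoin_iff[OF Q(1) that(1) b(1)]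
      unfolding S_def by blast
  qed
  have "x \<in> Q \<or> y \<in> Q" if "x \<in> M" "y \<in> M" "x \<squnion> y \<in> Q" for x y
  proof (rule ccontr)
    assume "\<not> (x \<in> Q \<or> y \<in> Q)"
    then have "(x \<Rightarrow>\<^sub>A b) \<sqinter> (y \<Rightarrow>\<^sub>A b) \<sqinter> (x \<squnion> y) \<in> Q"
      using imp_b that Q(1) filter_meet by simp
    then have "b \<in> Q"
      using filter_upward[OF Q(1) _ b(1)] imp_meet_imp_meet_join_le[OF that(1,2) b(1)] by blast
    with Q(3) show False ..
  qed
  moreover have "fbot A \<notin> Q" using Q filter_upward bot_le b(1) by blast
  ultimately have "prime_filter Q"
    using Q(1) unfolding prime_filter_def proper_filter_def by blast
  then show ?thesis using that Q by blast
qed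

lemma ultrafilter_prime:
  assumes T: "ultrafilter A T"
  shows "prime_filter T"
proof -
  have "is_filter A T" "fbot A \<notin> T" using T unfolding ultrafilter_def proper_filter_def by auto
  then obtain Q where Q: "prime_filter Q" "T \<subseteq> Q" using prime_filter_theorem bot_closed by blast
  then have "Q = T" using T unfolding ultrafilter_def prime_filter_def by blast
  then show ?thesis using Q by simp
qed

lemma imp_mem_prime_filter_iff:
  assumes P: "prime_filter P" and a: "a \<in> M" and b: "b \<in> M"
  shows "a \<Rightarrow>\<^sub>A b \<in> P \<longleftrightarrow> (\<forall>Q. prime_filter Q \<longrightarrow> P \<subseteq> Q \<longrightarrow> a \<in> Q \<longrightarrow> b \<in> Q)"
proof
  assume "a \<Rightarrow>\<^sub>A b \<in> P"
  then show "\<forall>Q. prime_filter Q \<longrightarrow> P \<subseteq> Q \<longrightarrow> a \<in> Q \<longrightarrow> b \<in> Q"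
    using prime_filter_is_filter filter_meet filter_upward imp_meet_le a b by blast
next
  assume H: "\<forall>Q. prime_filter Q \<longrightarrow> P \<subseteq> Q \<longrightarrow> a \<in> Q \<longrightarrow> b \<in> Q"
  show "a \<Rightarrow>\<^sub>A b \<in> P"
  proof (rule ccontr)
    assume "a \<Rightarrow>\<^sub>A b \<notin> P"
    then have "b \<notin> filter_adjoin P a"
      using mem_filter_adjoin_iff prime_filter_is_filter[OF P] a b by blast
    then obtain Q where "prime_filter Q" "filter_adjoin P a \<subseteq> Q" "b \<notin> Q"
      using prime_filter_theorem filter_adjoin(1) prime_filter_is_filter[OF P] a b by blast
    then show False using H filter_adjoin[OF prime_filter_is_filter[OF P] a] by blast
  qed
qed

lemma prime_filter_Union_chain:
  assumes "C \<noteq> {}" "\<forall>P\<in>C. prime_filter P" "chain\<^sub>\<subseteq> C"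
  shows "prime_filter (\<Union>C)"
proof -
  have "x \<in> \<Union>C \<or> y \<in> \<Union>C" if "x \<in> M" "y \<in> M" "x \<squnion> y \<in> \<Union>C" for x y
    using that assms(2) prime_filter_join_iff by blast
  moreover have "is_filter A (\<Union>C)"
    using filter_Union_chain assms prime_filter_is_filter by blast
  moreover have "fbot A \<notin> \<Union>C" using assms(2) prime_filter_bot by blast
  ultimately show ?thesis unfolding prime_filter_def proper_filter_def by blast
qed

lemma join_prime_top_imp_prime_filter:
  assumes "ftop A \<noteq> fbot A"
    and "\<forall>x\<in>M. \<forall>y\<in>M. x \<squnion> y = ftop A \<longrightarrow> x = ftop A \<or> y = ftop A"
  shows "prime_filter {ftop A}"
proof -
  have "b = ftop A" if "b \<in> M" "ftop A \<preceq> b" for b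
    using that le_antisym le_top top_closed by blast
  then have "is_filter A {ftop A}" unfolding is_filter_def using meet_idem by auto
  then show ?thesis using assms unfolding prime_filter_def proper_filter_def by auto
qed

end

text \<open>The type of worlds is fixed by the statement to \<open>(nat + 'm) set set\<close>; a prime filter
  \<open>P\<close> is represented there as the family of singletons \<open>{Inr m}\<close>, \<open>m \<in> P\<close>.\<close>

definition embed :: "'m set \<Rightarrow> ('a + 'm) set set" where
  "embed P = (\<lambda>m. {Inr m}) ` P"

lemma embed_subset_iff [simp]: "embed P \<subseteq> embed Q \<longleftrightarrow> P \<subseteq> Q"
  unfolding embed_def by auto

lemma embed_inj: "embed P = embed Q \<Longrightarrow> P = Q"
  by (metis embed_subset_iff order_refl subset_antisym)

locale L5 =
  fixes A :: "('m, 'z) L5model_scheme"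
  assumes L5_model: "L5_model A"

sublocale L5 \<subseteq> heyting
  using L5_model unfolding L5_model_def by unfold_locales blast

context L5
begin

lemma box_closed: "m \<in> M \<Longrightarrow> fbox A m \<in> M"
  and box_le_join: "m \<in> M \<Longrightarrow> m' \<in> M \<Longrightarrow> fbox A (m \<squnion> m') \<preceq> fbox A m \<squnion> fbox A m'"
  and box_cases: "m \<in> M \<Longrightarrow> fbox A m = (if m = ftop A then ftop A else fbot A)"
  using L5_model unfolding L5_model_def by blast+

lemma TRUE_ultrafilter: "ultrafilter A (TRUE A)"
  using L5_model unfolding L5_model_def by blast

lemma top_ne_bot: "ftop A \<noteq> fbot A"
  using TRUE_ultrafilter filter_top
  unfolding ultrafilter_def proper_filter_def by force

lemma top_join_prime:
  assumes x: "x \<in> M" and y: "y \<in> M" and "x \<squnion> y = ftop A"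
  shows "x = ftop A \<or> y = ftop A"
proof (rule ccontr)
  assume "\<not> ?thesis"
  then have "ftop A \<preceq> fbot A \<squnion> fbot A"
    using box_le_join[OF x y] box_cases x y assms(3) by simp
  then show False
    using join_idem le_antisym bot_le top_ne_bot by simp
qed

lemma eval_closed: "\<forall>x. \<gamma> x \<in> M \<Longrightarrow> eval A \<gamma> \<phi> \<in> M"
  by (induction \<phi>) (simp_all add: box_closed)

definition canonical_worlds :: "(nat + 'm) set set set" where
  "canonical_worlds = embed ` {P. prime_filter P}"

definition canonical_assignment :: "(nat \<Rightarrow> 'm) \<Rightarrow> nat \<Rightarrow> (nat + 'm) set set set" where
  "canonical_assignment \<gamma> x = embed ` {P. prime_filter P \<and> \<gamma> x \<in> P}"

abbreviation W where "W \<equiv> canonical_worlds"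

lemma prime_filter_singleton_top: "prime_filter {ftop A}"
  using join_prime_top_imp_prime_filter top_ne_bot top_join_prime by blast

lemma top_subset_prime_filter: "prime_filter P \<Longrightarrow> {ftop A} \<subseteq> P"
  using prime_filter_is_filter filter_top by blast

lemma wB_canonical: "wB W (\<subseteq>) = embed {ftop A}"
  unfolding wB_def
proof (rule the_equality)
  show "embed {ftop A} \<in> W \<and> (\<forall>w\<in>W. embed {ftop A} \<subseteq> w)"
    using prime_filter_singleton_top top_subset_prime_filter unfolding canonical_worlds_def by auto
  show "b = embed {ftop A}" if b: "b \<in> W \<and> (\<forall>w\<in>W. b \<subseteq> w)" for b
  proof -
    obtain P where P: "prime_filter P" "b = embed P" using b unfolding canonical_worlds_def by blast
    then have "P \<subseteq> {ftop A}" using b prime_filter_singleton_top unfolding canonical_worlds_def by auto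
    then show ?thesis using P top_subset_prime_filter by (metis subset_antisym)
  qed
qed

lemma canonical_frame: "L5_frame W (\<subseteq>)"
proof -
  have "\<exists>u\<in>W. \<forall>c\<in>C. c \<subseteq> u" if C: "C \<subseteq> W" "\<forall>u\<in>C. \<forall>v\<in>C. u \<subseteq> v \<or> v \<subseteq> u" for C
  proof (cases "C = {}")
    case True
    then show ?thesis using prime_filter_singleton_top unfolding canonical_worlds_def by blast
  next
    case False
    define D where "D = {P. prime_filter P \<and> embed P \<in> C}"
    have C_eq: "C = embed ` D" using C(1) unfolding D_def canonical_worlds_def by blast
    have "chain\<^sub>\<subseteq> D" using C(2) unfolding chain_subset_def C_eq by simp
    moreover have "D \<noteq> {}" using False C_eq by blast
    moreover have "\<forall>P\<in>D. prime_filter P" unfolding D_def by blast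
    ultimately have "prime_filter (\<Union>D)" using prime_filter_Union_chain by blast
    moreover have "embed P \<subseteq> embed (\<Union>D)" if "P \<in> D" for P
      using that by (simp add: Sup_upper)
    ultimately show ?thesis unfolding C_eq canonical_worlds_def by blast
  qed
  moreover have "embed {ftop A} \<in> W" "\<forall>w\<in>W. embed {ftop A} \<subseteq> w"
    using prime_filter_singleton_top top_subset_prime_filter unfolding canonical_worlds_def by auto
  ultimately show ?thesis unfolding L5_frame_def by (intro conjI; blast)
qed

lemma canonical_truth:
  assumes \<gamma>: "\<forall>x. \<gamma> x \<in> M" and "prime_filter P"
  shows "ksat W (\<subseteq>) (canonical_assignment \<gamma>) (embed P) \<phi> \<longleftrightarrow> eval A \<gamma> \<phi> \<in> P"
  using assms(2)
proof (induction \<phi> arbitrary: P)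
  case (Var x)
  then show ?case
    unfolding canonical_assignment_def using embed_inj by (auto simp: image_iff)
next
  case Bot
  then show ?case using prime_filter_bot by simp
next
  case (And p q)
  then show ?case
    using filter_meet_iff[OF prime_filter_is_filter[OF And.prems] eval_closed[OF \<gamma>] eval_closed[OF \<gamma>]]
    by simp
next
  case (Or p q)
  then show ?case
    using prime_filter_join_iff[OF Or.prems eval_closed[OF \<gamma>] eval_closed[OF \<gamma>]] by simp
next
  case (Imp p q)
  have "ksat W (\<subseteq>) (canonical_assignment \<gamma>) (embed P) (Imp p q) \<longleftrightarrow>
    (\<forall>Q. prime_filter Q \<longrightarrow> P \<subseteq> Q \<longrightarrow> eval A \<gamma> p \<in> Q \<longrightarrow> eval A \<gamma> q \<in> Q)"
    using Imp.IH unfolding canonical_worlds_def by auto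
  then show ?case
    using imp_mem_prime_filter_iff[OF Imp.prems eval_closed[OF \<gamma>] eval_closed[OF \<gamma>]] by simp
next
  case (Box p)
  have "is_filter A P" "fbot A \<notin> P"
    using Box.prems prime_filter_is_filter prime_filter_bot by blast+
  then have "eval A \<gamma> p \<in> {ftop A} \<longleftrightarrow> fbox A (eval A \<gamma> p) \<in> P"
    using box_cases[OF eval_closed[OF \<gamma>]] filter_top by auto
  then show ?case using Box.IH[OF prime_filter_singleton_top] wB_canonical by simp
qed

lemma TRUE_R_maximal: "R_maximal W (\<subseteq>) (embed (TRUE A))"
proof -
  have "Q = TRUE A" if "prime_filter Q" "TRUE A \<subseteq> Q" for Q
    using that TRUE_ultrafilter unfolding ultrafilter_def prime_filter_def by blast
  then show ?thesis
    using ultrafilter_prime[OF TRUE_ultrafilter]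
    unfolding R_maximal_def canonical_worlds_def by auto
qed

lemma canonical_assignment_frame_assignment:
  "frame_assignment W (\<subseteq>) (canonical_assignment \<gamma>)"
proof -
  have "embed Q \<in> canonical_assignment \<gamma> x"
    if "prime_filter Q" "P \<subseteq> Q" "embed P \<in> canonical_assignment \<gamma> x" for P Q x
    using that embed_inj unfolding canonical_assignment_def by auto
  then show ?thesis
    unfolding frame_assignment_def canonical_worlds_def
    by (auto simp: canonical_assignment_def)
qed

end

theorem theorem5p2:
  fixes A :: "'m L5model" and \<gamma> :: "nat \<Rightarrow> 'm"
  assumes "L5_model A"
      and "\<forall>x. \<gamma> x \<in> carrier A"
  shows "\<exists>(W :: (nat + 'm) set set set) R wT g.
           L5_frame W R \<and> R_maximal W R wT \<and> frame_assignment W R g \<and>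
           (\<forall>\<phi>. msat A \<gamma> \<phi> \<longleftrightarrow> ksat W R g wT \<phi>)"
proof -
  interpret L5 A by (fact L5.intro[OF assms(1)])
  have "msat A \<gamma> \<phi> \<longleftrightarrow> ksat W (\<subseteq>) (canonical_assignment \<gamma>) (embed (TRUE A)) \<phi>" for \<phi>
    using canonical_truth[OF assms(2) ultrafilter_prime[OF TRUE_ultrafilter]]
    unfolding msat_def by simp
  then show ?thesis
    using canonical_frame TRUE_R_maximal canonical_assignment_frame_assignment by blast
qed

end
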